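(* There exist $a_1\ge1$ and $b_1\in(0,1)$, depending only on $\alpha$, such that for every $a>a_1$ and every $b\in(0,b_1)$ the following holds: if $p,q\in\mathbb H$ satisfy $p\notin B(q,r_q)$ and $q\notin B(p,r_p)$, then at most one of $p,q$ belongs to $\mathcal T(a,b)$.
   Context: $\mathbb H=\mathbb R^3$, $p=(x_p,y_p,z_p)$, $\rho_p=\sqrt{x_p^2+y_p^2}$, group law $(x,y,z)\cdot(x',y',z')=(x+x',y+y',z+z'+\tfrac12(xy'-yx'))$, dilations $\delta_\lambda(x,y,z)=(\lambda x,\lambda y,\lambda^2z)$. Fix $\alpha>0$ such that $d_\alpha(p,q)=\inf\{r>0:\delta_{1/r}(p^{-1}\cdot q)\in B_\alpha\}$ is a distance, $B_\alpha$ the closed Euclidean ball of radius $\alpha$ at $0$. $B(p,r)=\{q:d_\alpha(q,p)\le r\}$, $r_p=d_\alpha(0,p)$. $\mathcal T(a,b)=\{p: z_p<-a,\ \rho_p<b\}$. *)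

theory Defs
  imports "HOL-Analysis.Analysis"
begin

type_synonym heis = "real \<times> real \<times> real"

definition hmult :: "heis \<Rightarrow> heis \<Rightarrow> heis" where
  "hmult p q = (case p of (x, y, z) \<Rightarrow> case q of (x', y', z') \<Rightarrow>
     (x + x', y + y', z + z' + (x * y' - y * x') / 2))"

definition hinv :: "heis \<Rightarrow> heis" where
  "hinv p = (case p of (x, y, z) \<Rightarrow> (-x, -y, -z))"

definition hdil :: "real \<Rightarrow> heis \<Rightarrow> heis" where
  "hdil l p = (case p of (x, y, z) \<Rightarrow> (l * x, l * y, l ^ 2 * z))"

definition eucl_norm3 :: "heis \<Rightarrow> real" where
  "eucl_norm3 p = (case p of (x, y, z) \<Rightarrow> sqrt (x^2 + y^2 + z^2))"

definition B_alpha :: "real \<Rightarrow> heis set" where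
  "B_alpha \<alpha> = {p. eucl_norm3 p \<le> \<alpha>}"

definition d_alpha :: "real \<Rightarrow> heis \<Rightarrow> heis \<Rightarrow> real" where
  "d_alpha \<alpha> p q = Inf {r. r > 0 \<and> hdil (1 / r) (hmult (hinv p) q) \<in> B_alpha \<alpha>}"

definition is_distance :: "(heis \<Rightarrow> heis \<Rightarrow> real) \<Rightarrow> bool" where
  "is_distance d \<longleftrightarrow>
     (\<forall>p q. 0 \<le> d p q) \<and> (\<forall>p q. d p q = 0 \<longleftrightarrow> p = q) \<and>
     (\<forall>p q. d p q = d q p) \<and> (\<forall>p q s. d p s \<le> d p q + d q s)"

definition hball :: "real \<Rightarrow> heis \<Rightarrow> real \<Rightarrow> heis set" where
  "hball \<alpha> p r = {q. d_alpha \<alpha> q p \<le> r}"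

definition r_pt :: "real \<Rightarrow> heis \<Rightarrow> real" where
  "r_pt \<alpha> p = d_alpha \<alpha> (0, 0, 0) p"

definition rho :: "heis \<Rightarrow> real" where
  "rho p = (case p of (x, y, z) \<Rightarrow> sqrt (x^2 + y^2))"

definition zc :: "heis \<Rightarrow> real" where
  "zc p = (case p of (x, y, z) \<Rightarrow> z)"

definition Tset :: "real \<Rightarrow> real \<Rightarrow> heis set" where
  "Tset a b = {p. zc p < -a \<and> rho p < b}"

end

theory Submission
  imports Defs
begin

(* Write N(v) = inf {r > 0. |dil_(1/r) v| <= alpha} for the gauge of the
   distance d_alpha, so that d_alpha p q = N(p^-1 q) and r_p = N(p).  For v = (x,y,z)
   the squared Euclidean norm of dil_(1/r) v is (x^2+y^2)/r^2 + z^2/r^4, which is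
   decreasing in r; hence N(v) <= r as soon as this quantity is <= alpha^2 at r, and
   N(v) >= s as soon as it exceeds alpha^2 at s.
   Let p, q lie in T(a,b) with z_q <= z_p and put K = -z_q - 1 > 2, s = sqrt(K/alpha).
   The vertical coordinate alone forces r_q >= s.  On the other hand p^-1 q has
   horizontal part of squared length <= 4b^2 <= alpha and, because the symplectic
   term is at most rho_p rho_q / 2 <= 1/2, vertical part of modulus <= K - 1; this
   forces d_alpha(p,q) <= s.  So q is within distance r_q of p, i.e. p lies in
   B(q, r_q).  By symmetry the theorem follows with a1 = 3, b1 = min(1/2, sqrt alpha/2).
   The argument does not use that d_alpha satisfies the metric axioms. *)

text \<open>Squared Euclidean norm of the dilate \<open>hdil (1/r) (x,y,z)\<close>, expressed through
  the squared horizontal length \<open>A\<close> and the squared height \<open>Z\<close>.\<close>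
definition scaled_norm_sq :: "real \<Rightarrow> real \<Rightarrow> real \<Rightarrow> real" where
  "scaled_norm_sq A Z r = A / r^2 + Z / r^4"

definition gauge :: "real \<Rightarrow> heis \<Rightarrow> real" where
  "gauge \<alpha> v = Inf {r. r > 0 \<and> hdil (1 / r) v \<in> B_alpha \<alpha>}"

lemma d_alpha_gauge: "d_alpha \<alpha> p q = gauge \<alpha> (hmult (hinv p) q)"
  by (simp add: d_alpha_def gauge_def)

lemma r_pt_gauge: "r_pt \<alpha> p = gauge \<alpha> p"
  by (cases p) (simp add: r_pt_def d_alpha_gauge hinv_def hmult_def)

lemma dilate_in_B_alpha_iff:
  assumes "r > 0" "\<alpha> > 0"
  shows "hdil (1/r) (x,y,z) \<in> B_alpha \<alpha> \<longleftrightarrow> scaled_norm_sq (x^2+y^2) (z^2) r \<le> \<alpha>^2"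
proof -
  have "hdil (1/r) (x,y,z) \<in> B_alpha \<alpha> \<longleftrightarrow> sqrt ((x/r)^2 + (y/r)^2 + ((1/r)^2*z)^2) \<le> \<alpha>"
    by (simp add: hdil_def B_alpha_def eucl_norm3_def)
  also have "\<dots> \<longleftrightarrow> (x/r)^2 + (y/r)^2 + ((1/r)^2*z)^2 \<le> \<alpha>^2"
    using assms(2) sqrt_le_D real_le_lsqrt[of \<alpha>] by auto
  also have "(x/r)^2 + (y/r)^2 + ((1/r)^2*z)^2 = scaled_norm_sq (x^2+y^2) (z^2) r"
    by (simp add: scaled_norm_sq_def power_divide power_mult_distrib add_divide_distrib)
  finally show ?thesis .
qed

lemma scaled_norm_sq_antimono:
  assumes "0 < r" "r \<le> s" "A \<ge> 0" "Z \<ge> 0"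
  shows "scaled_norm_sq A Z s \<le> scaled_norm_sq A Z r"
proof -
  have "r^2 \<le> s^2" "r^4 \<le> s^4" using assms by (auto intro: power_mono)
  then have "A / s^2 \<le> A / r^2" "Z / s^4 \<le> Z / r^4" using assms
    by (auto intro!: divide_left_mono mult_pos_pos)
  thus ?thesis by (simp add: scaled_norm_sq_def)
qed

text \<open>Every point is eventually dilated into B_alpha, so the set defining the gauge is
  nonempty and its infimum is meaningful.\<close>
lemma gauge_set_nonempty:
  assumes "\<alpha> > 0"
  shows "\<exists>t > 0. hdil (1/t) (x,y,z) \<in> B_alpha \<alpha>"
proof -
  define A where "A = x^2 + y^2"
  define Z where "Z = z^2"
  have AZ: "A \<ge> 0" "Z \<ge> 0" by (auto simp: A_def Z_def)
  define t where "t = max 1 (sqrt (A + Z) / \<alpha>)"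
  have t1: "t \<ge> 1" by (simp add: t_def)
  have "sqrt (A + Z) / \<alpha> \<le> t" by (simp add: t_def)
  hence "sqrt (A + Z) \<le> \<alpha> * t" using assms by (simp add: divide_le_eq mult.commute)
  hence "(sqrt (A + Z))^2 \<le> (\<alpha> * t)^2" using AZ by (intro power_mono) auto
  hence AZ_le: "A + Z \<le> \<alpha>^2 * t^2" using AZ by (simp add: power_mult_distrib)
  have "Z / t^4 \<le> Z / t^2"
    using AZ t1 by (intro divide_left_mono) (auto simp: power_increasing)
  hence "scaled_norm_sq A Z t \<le> (A + Z) / t^2"
    by (simp add: scaled_norm_sq_def add_divide_distrib)
  also have "\<dots> \<le> \<alpha>^2" using AZ_le t1 by (simp add: divide_le_eq)
  finally have "scaled_norm_sq A Z t \<le> \<alpha>^2" .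
  moreover have "t > 0" using t1 by simp
  ultimately show ?thesis
    using dilate_in_B_alpha_iff[of t \<alpha> x y z] assms by (auto simp: A_def Z_def)
qed

lemma gauge_le:
  assumes "r > 0" "\<alpha> > 0" "scaled_norm_sq (x^2+y^2) (z^2) r \<le> \<alpha>^2"
  shows "gauge \<alpha> (x,y,z) \<le> r"
  unfolding gauge_def
proof (rule cInf_lower)
  show "r \<in> {r. r > 0 \<and> hdil (1/r) (x,y,z) \<in> B_alpha \<alpha>}"
    using assms dilate_in_B_alpha_iff[of r \<alpha>] by auto
  show "bdd_below {r. r > 0 \<and> hdil (1/r) (x,y,z) \<in> B_alpha \<alpha>}"
    by (rule bdd_belowI[of _ 0]) auto
qed

text \<open>Lower comparison: if the dilate by \<open>1/s\<close> lies outside B_alpha, then by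
  monotonicity so do all dilates by \<open>1/r\<close> with \<open>r \<le> s\<close>.\<close>
lemma gauge_ge:
  assumes "s > 0" "\<alpha> > 0" "scaled_norm_sq (x^2+y^2) (z^2) s > \<alpha>^2"
  shows "gauge \<alpha> (x,y,z) \<ge> s"
  unfolding gauge_def
proof (rule cInf_greatest)
  show "{r. r > 0 \<and> hdil (1/r) (x,y,z) \<in> B_alpha \<alpha>} \<noteq> {}"
    using gauge_set_nonempty[OF assms(2)] by blast
next
  fix r assume "r \<in> {r. r > 0 \<and> hdil (1/r) (x,y,z) \<in> B_alpha \<alpha>}"
  hence r: "r > 0" "scaled_norm_sq (x^2+y^2) (z^2) r \<le> \<alpha>^2"
    using dilate_in_B_alpha_iff[of r \<alpha> x y z] assms(2) by auto
  show "s \<le> r"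
  proof (rule ccontr)
    assume "\<not> s \<le> r"
    hence "scaled_norm_sq (x^2+y^2) (z^2) s \<le> scaled_norm_sq (x^2+y^2) (z^2) r"
      using r by (intro scaled_norm_sq_antimono) auto
    thus False using r assms by simp
  qed
qed

lemma scaled_norm_sq_at_sqrt:
  assumes "S > 0"
  shows "scaled_norm_sq A Z (sqrt S) = A / S + Z / S^2"
proof -
  have "sqrt S ^ 4 = (sqrt S ^ 2)^2" by simp
  thus ?thesis using assms by (simp add: scaled_norm_sq_def)
qed

text \<open>A point of height \<open>z < -1\<close> has gauge at least \<open>sqrt ((-z-1)/\<alpha>)\<close>:
  already its vertical coordinate is too large at that scale.\<close>
lemma gauge_lower_by_height:
  assumes al: "\<alpha> > 0" and z: "z < -1"
  shows "gauge \<alpha> (x,y,z) \<ge> sqrt ((-z - 1) / \<alpha>)"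
proof (rule gauge_ge[OF _ al])
  define S where "S = (-z - 1) / \<alpha>"
  have S0: "S > 0" using z al by (simp add: S_def)
  show "sqrt S > 0" using S0 by simp
  have "\<alpha>^2 * 1 < \<alpha>^2 * (z^2 / (-z - 1)^2)"
  proof -
    have "(-z - 1)^2 < z^2" using z by (simp add: power2_eq_square algebra_simps)
    hence "z^2 / (-z - 1)^2 > 1" using z by simp
    thus ?thesis using al by (intro mult_strict_left_mono) auto
  qed
  also have "\<alpha>^2 * (z^2 / (-z - 1)^2) = z^2 / S^2"
    using z al by (simp add: S_def field_simps)
  also have "\<dots> \<le> scaled_norm_sq (x^2+y^2) (z^2) (sqrt S)"
    using S0 by (simp add: scaled_norm_sq_at_sqrt)
  finally show "scaled_norm_sq (x^2+y^2) (z^2) (sqrt S) > \<alpha>^2" by simp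
qed

lemma gauge_upper_at_scale:
  assumes al: "\<alpha> > 0" and K: "K \<ge> 1"
    and uv: "u^2 + v^2 \<le> \<alpha>" and w: "\<bar>w\<bar> \<le> K - 1"
  shows "gauge \<alpha> (u,v,w) \<le> sqrt (K / \<alpha>)"
proof (rule gauge_le[OF _ al])
  define S where "S = K / \<alpha>"
  have S0: "S > 0" using K al by (simp add: S_def)
  show "sqrt S > 0" using S0 by simp
  have w2: "w^2 \<le> (K - 1)^2" using w by (metis abs_ge_zero power2_abs power_mono)
  have "scaled_norm_sq (u^2+v^2) (w^2) (sqrt S) = (u^2+v^2) / S + w^2 / S^2"
    using S0 by (rule scaled_norm_sq_at_sqrt)
  also have "\<dots> \<le> \<alpha> / S + (K - 1)^2 / S^2"
    using uv w2 S0 by (intro add_mono divide_right_mono) auto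
  also have "\<dots> = \<alpha>^2 * (K + (K - 1)^2) / K^2"
    using al K by (simp add: S_def field_simps power2_eq_square)
  also have "\<dots> \<le> \<alpha>^2"
  proof -
    have "K + (K - 1)^2 \<le> K^2" using K by (simp add: power2_eq_square algebra_simps)
    hence "\<alpha>^2 * (K + (K - 1)^2) \<le> \<alpha>^2 * K^2" by (simp add: mult_left_mono)
    thus ?thesis using K by (simp add: divide_le_eq)
  qed
  finally show "scaled_norm_sq (u^2+v^2) (w^2) (sqrt S) \<le> \<alpha>^2" .
qed

lemma Tset_iff:
  assumes "b > 0"
  shows "(x,y,z) \<in> Tset a b \<longleftrightarrow> z < -a \<and> x^2 + y^2 < b^2"
proof -
  have "sqrt (x^2 + y^2) < b \<longleftrightarrow> x^2 + y^2 < b^2"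
    using assms real_less_lsqrt[of b] real_le_rsqrt[of b] by (meson less_le not_le)
  thus ?thesis by (simp add: Tset_def zc_def rho_def)
qed

lemma hinv_hmult_coords:
  "hmult (hinv (xp,yp,zp)) (xq,yq,zq) = (xq - xp, yq - yp, zq - zp + (yp*xq - xp*yq)/2)"
  by (simp add: hmult_def hinv_def)

text \<open>Lagrange's identity bounds the symplectic term by the product of horizontal lengths.\<close>
lemma symplectic_sq_le:
  fixes xp yp xq yq :: real
  shows "(yp*xq - xp*yq)^2 \<le> (xp^2+yp^2) * (xq^2+yq^2)"
proof -
  have "(xp^2+yp^2) * (xq^2+yq^2) - (yp*xq - xp*yq)^2 = (xp*xq + yp*yq)^2"
    by (simp add: power2_eq_square algebra_simps)
  thus ?thesis using zero_le_power2[of "xp*xq + yp*yq"] by linarith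
qed

lemma symplectic_le_one:
  fixes xp yp xq yq :: real
  assumes "xp^2 + yp^2 \<le> 1" "xq^2 + yq^2 \<le> 1"
  shows "\<bar>yp*xq - xp*yq\<bar> \<le> 1"
proof -
  have "(xp^2 + yp^2) * (xq^2 + yq^2) \<le> 1"
    using assms by (intro mult_le_one) auto
  hence "(yp*xq - xp*yq)^2 \<le> 1" using symplectic_sq_le[of yp xq xp yq] by linarith
  thus ?thesis by (simp add: abs_square_le_1)
qed

text \<open>If both endpoints have horizontal length at most \<open>sqrt B\<close>, the horizontal part of the
  increment has length at most \<open>2 sqrt B\<close> (squared form, via the parallelogram law).\<close>
lemma horizontal_increment_sq_le:
  fixes xp yp xq yq :: real
  assumes "xp^2 + yp^2 \<le> B" "xq^2 + yq^2 \<le> B"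
  shows "(xq - xp)^2 + (yq - yp)^2 \<le> 4 * B"
proof -
  have "2 * (xp^2 + yp^2) + 2 * (xq^2 + yq^2) - ((xq - xp)^2 + (yq - yp)^2)
        = (xq + xp)^2 + (yq + yp)^2"
    by (simp add: power2_eq_square algebra_simps)
  thus ?thesis
    using assms zero_le_power2[of "xq + xp"] zero_le_power2[of "yq + yp"] by (smt (verit))
qed

lemma vertical_increment_le:
  fixes c zq zp a :: real
  assumes "\<bar>c\<bar> \<le> 1" "zq \<le> zp" "zp < -a" "a \<ge> 3"
  shows "\<bar>zq - zp + c / 2\<bar> \<le> -zq - 2"
  using assms by (simp add: abs_le_iff)

lemma Tset_lower_point_ball:
  assumes al: "\<alpha> > 0" and a: "a \<ge> 3" and b: "0 < b" "4 * b^2 \<le> \<alpha>" "b \<le> 1"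
    and p: "p \<in> Tset a b" and q: "q \<in> Tset a b" and below: "zc q \<le> zc p"
  shows "d_alpha \<alpha> p q \<le> r_pt \<alpha> q"
proof -
  obtain xp yp zp where pe: "p = (xp,yp,zp)" by (cases p) auto
  obtain xq yq zq where qe: "q = (xq,yq,zq)" by (cases q) auto
  have P: "zp < -a" "xp^2 + yp^2 < b^2" using p Tset_iff[OF b(1)] by (auto simp: pe)
  have Q: "zq < -a" "xq^2 + yq^2 < b^2" using q Tset_iff[OF b(1)] by (auto simp: qe)
  have zz: "zq \<le> zp" using below by (simp add: pe qe zc_def)
  define K where "K = -zq - 1"
  have "(xq - xp)^2 + (yq - yp)^2 \<le> \<alpha>"
    using horizontal_increment_sq_le[of xp yp "b^2" xq yq] P Q b by (smt (verit))
  moreover have "\<bar>zq - zp + (yp*xq - xp*yq)/2\<bar> \<le> K - 1"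
  proof -
    have "b^2 \<le> 1" using b by (simp add: power_le_one)
    hence "\<bar>yp*xq - xp*yq\<bar> \<le> 1" using P Q by (intro symplectic_le_one) auto
    from vertical_increment_le[OF this zz P(1) a] show ?thesis by (simp add: K_def)
  qed
  ultimately have "d_alpha \<alpha> p q \<le> sqrt (K / \<alpha>)"
    using gauge_upper_at_scale[OF al] Q a
    by (simp add: pe qe d_alpha_gauge hinv_hmult_coords K_def)
  also have "\<dots> \<le> r_pt \<alpha> q"
    using gauge_lower_by_height[OF al, of zq xq yq] Q a by (simp add: qe r_pt_gauge K_def)
  finally show ?thesis .
qed

theorem lemma2p4:
  fixes \<alpha> :: real
  assumes "\<alpha> > 0" and "is_distance (d_alpha \<alpha>)"
  shows "\<exists>a1 b1. a1 \<ge> 1 \<and> 0 < b1 \<and> b1 < 1 \<and>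
     (\<forall>a b p q. a > a1 \<longrightarrow> 0 < b \<longrightarrow> b < b1 \<longrightarrow>
        p \<notin> hball \<alpha> q (r_pt \<alpha> q) \<longrightarrow> q \<notin> hball \<alpha> p (r_pt \<alpha> p) \<longrightarrow>
        \<not> (p \<in> Tset a b \<and> q \<in> Tset a b))"
proof -
  define b1 where "b1 = min (1/2) (sqrt \<alpha> / 2)"
  have b1: "0 < b1" "b1 < 1" using assms(1) by (auto simp: b1_def)
  have "\<not> (p \<in> Tset a b \<and> q \<in> Tset a b)"
    if a: "a > 3" and b: "0 < b" "b < b1"
      and far: "p \<notin> hball \<alpha> q (r_pt \<alpha> q)" "q \<notin> hball \<alpha> p (r_pt \<alpha> p)" for a b p q
  proof
    assume T: "p \<in> Tset a b \<and> q \<in> Tset a b"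
    have "\<bar>2 * b\<bar> \<le> sqrt \<alpha>" "b \<le> 1" using b by (auto simp: b1_def)
    hence bb: "4 * b^2 \<le> \<alpha>" "b \<le> 1"
      using sqrt_ge_absD[of "2 * b" \<alpha>] by (simp_all add: power_mult_distrib)
    note ball = Tset_lower_point_ball[OF assms(1) _ b(1) bb]
    consider "zc q \<le> zc p" | "zc p \<le> zc q" by linarith
    then show False
      using ball[of a p q] ball[of a q p] T a far by cases (auto simp: hball_def)
  qed
  thus ?thesis using b1 by (intro exI[of _ 3] exI[of _ b1]) auto
qed

end
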